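(* Let $p$ be a prime and $k\ge 0$ an integer, and let $T_{p,k}:=\{r\in\mathbb{Q}_{>0}: v_p(r)=0,\ v_p(r-1)\le k\}$. Then $$\chi(G(T_{p,k}))\le p^k(p-1).$$
   Context: For $R\subseteq\mathbb{Q}_{>0}\setminus\{1\}$, $G(R)$ is the graph with vertex set $\mathbb{N}=\{1,2,\dots\}$ and edge set $\{\{m,n\}: m/n\in R\}$. $\chi$ denotes chromatic number; $v_p$ is the $p$-adic valuation on $\mathbb{Q}$, $v_p(0)=\infty$. *)

theory Defs
  imports Complex_Main "HOL-Computational_Algebra.Primes" "HOL-Library.Extended_Nat"
begin

text \<open>The value at 0 (which is \<infinity> in the paper)
  is never used: every use below is guarded by a nonzeroness test.\<close>
definition padic_val :: "nat \<Rightarrow> rat \<Rightarrow> int" where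
  "padic_val p r = (case quotient_of r of (a, b) \<Rightarrow>
      int (multiplicity (int p) a) - int (multiplicity (int p) b))"

definition G_adj :: "rat set \<Rightarrow> nat \<Rightarrow> nat \<Rightarrow> bool" where
  "G_adj R m n \<longleftrightarrow> 1 \<le> m \<and> 1 \<le> n \<and>
     (of_nat m / of_nat n \<in> R \<or> of_nat n / of_nat m \<in> R)"

definition chromatic_number :: "'a set \<Rightarrow> ('a \<Rightarrow> 'a \<Rightarrow> bool) \<Rightarrow> enat" where
  "chromatic_number V E = Inf {enat c | c. \<exists>f :: 'a \<Rightarrow> nat.
      (\<forall>v\<in>V. f v < c) \<and> (\<forall>u\<in>V. \<forall>v\<in>V. E u v \<longrightarrow> f u \<noteq> f v)}"

definition chi_G :: "rat set \<Rightarrow> enat" where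
  "chi_G R = chromatic_number {n::nat. 1 \<le> n} (G_adj R)"

text \<open>T_{p,k} = {r \<in> Q_{>0} : v_p(r) = 0, v_p(r-1) \<le> k}, with v_p(0) = \<infinity>
  (so r = 1 is excluded).\<close>
definition T_set :: "nat \<Rightarrow> nat \<Rightarrow> rat set" where
  "T_set p k = {r. 0 < r \<and> padic_val p r = 0 \<and> r \<noteq> 1 \<and> padic_val p (r - 1) \<le> int k}"

end

theory Submission
  imports Defs "HOL-Number_Theory.Totient"
begin

text \<open>Colour a vertex n = p^v u (with p not dividing u) by the residue of u modulo p^(k+1); this
  residue is a unit, so there are \<phi>(p^(k+1)) = p^k (p-1) colours. If m/n \<in> T_{p,k}, then m and n
  have the same p-adic valuation v and p^(v+k+1) does not divide m - n, so their p-free parts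
  differ modulo p^(k+1).\<close>

lemma chromatic_number_le_card:
  assumes "finite S" and "f ` V \<subseteq> S" and "\<forall>u\<in>V. \<forall>v\<in>V. E u v \<longrightarrow> f u \<noteq> f v"
  shows "chromatic_number V E \<le> enat (card S)"
proof -
  obtain h where h: "bij_betw h S {0..<card S}"
    using ex_bij_betw_finite_nat[OF assms(1)] by blast
  have "\<forall>v\<in>V. (h \<circ> f) v < card S"
    using bij_betw_apply[OF h] assms(2) by fastforce
  moreover have "inj_on h S" using h by (simp add: bij_betw_def)
  then have "\<forall>u\<in>V. \<forall>v\<in>V. E u v \<longrightarrow> (h \<circ> f) u \<noteq> (h \<circ> f) v"
    using assms(2,3) by (metis comp_apply image_subset_iff inj_onD)
  ultimately show ?thesis
    unfolding chromatic_number_def by (intro Inf_lower) blast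
qed

lemma padic_val_of_int_div:
  fixes a b :: int
  assumes "prime p" and "a \<noteq> 0" and "b \<noteq> 0"
  shows "padic_val p (of_int a / of_int b) =
           int (multiplicity (int p) a) - int (multiplicity (int p) b)"
proof -
  obtain a' b' where q: "quotient_of (of_int a / of_int b) = (a', b')"
    by (cases "quotient_of (of_int a / of_int b :: rat)") auto
  have "b' > 0" using quotient_of_denom_pos[OF q] .
  moreover have "(of_int a / of_int b :: rat) = of_int a' / of_int b'"
    using quotient_of_div[OF q] .
  ultimately have cross: "a * b' = a' * b"
    using assms(3) by (simp add: frac_eq_eq flip: of_int_mult of_int_eq_iff)
  with \<open>b' > 0\<close> assms(2) have "a' \<noteq> 0" by auto
  have "prime_elem (int p)" using assms(1) by simp
  then have "multiplicity (int p) a + multiplicity (int p) b' =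
             multiplicity (int p) a' + multiplicity (int p) b"
    using cross assms(2,3) \<open>a' \<noteq> 0\<close> \<open>b' > 0\<close>
    by (metis less_irrefl prime_elem_multiplicity_mult_distrib)
  then show ?thesis unfolding padic_val_def q by simp
qed

definition p_free_part :: "nat \<Rightarrow> int \<Rightarrow> int" where
  "p_free_part p a = a div int p ^ multiplicity (int p) a"

lemma p_free_part_decompose:
  assumes "prime p" and "a \<noteq> 0"
  shows "a = int p ^ multiplicity (int p) a * p_free_part p a"
    and "\<not> int p dvd p_free_part p a"
proof -
  define v where "v = multiplicity (int p) a"
  have "\<not> is_unit (int p)" using prime_gt_1_nat[OF assms(1)] by simp
  then obtain u where u: "a = int p ^ v * u" "\<not> int p dvd u"
    using multiplicity_decompose'[OF assms(2)] unfolding v_def by blast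
  have "p_free_part p a = a div int p ^ v" by (simp add: p_free_part_def v_def)
  also have "\<dots> = u" using assms(1) by (subst u(1)) simp
  finally have free: "p_free_part p a = u" .
  show "a = int p ^ multiplicity (int p) a * p_free_part p a"
    using u(1) unfolding free v_def .
  show "\<not> int p dvd p_free_part p a"
    using u(2) unfolding free .
qed

lemma p_free_part_cong_imp_dvd_diff:
  assumes "prime p" and "a \<noteq> 0" and "b \<noteq> 0"
    and "multiplicity (int p) a = multiplicity (int p) b"
    and "[p_free_part p a = p_free_part p b] (mod int p ^ j)"
  shows "int p ^ (multiplicity (int p) a + j) dvd a - b"
proof -
  define v where "v = multiplicity (int p) a"
  have "int p ^ j dvd p_free_part p a - p_free_part p b"
    using assms(5) by (simp add: cong_iff_dvd_diff dvd_diff_commute)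
  then have "int p ^ v * int p ^ j dvd int p ^ v * (p_free_part p a - p_free_part p b)"
    by (rule mult_dvd_mono[OF dvd_refl])
  moreover have "int p ^ v * (p_free_part p a - p_free_part p b) = a - b"
    using p_free_part_decompose(1)[OF assms(1,2)] p_free_part_decompose(1)[OF assms(1,3)] assms(4)
    by (simp add: v_def right_diff_distrib)
  ultimately have "int p ^ v * int p ^ j dvd a - b" by (simp only:)
  then show ?thesis by (simp only: v_def power_add)
qed

definition residue_colour :: "nat \<Rightarrow> nat \<Rightarrow> nat \<Rightarrow> nat" where
  "residue_colour p k n = nat (p_free_part p (int n) mod int p ^ (k + 1))"

lemma residue_colour_in_totatives:
  assumes "prime p" and "n \<ge> 1"
  shows "residue_colour p k n \<in> totatives (p ^ (k + 1))"
proof -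
  define c where "c = p_free_part p (int n) mod int p ^ (k + 1)"
  have pos: "int p ^ (k + 1) > 0" using prime_gt_0_nat[OF assms(1)] by simp
  have "\<not> int p dvd p_free_part p (int n)"
    using p_free_part_decompose(2)[OF assms(1)] assms(2) by simp
  then have "\<not> int p dvd c"
    unfolding c_def by (simp add: dvd_mod_iff)
  moreover have "0 \<le> c" "c < int p ^ (k + 1)" using pos by (simp_all add: c_def)
  moreover have "c \<noteq> 0" using \<open>\<not> int p dvd c\<close> by auto
  ultimately have "\<not> p dvd nat c" "0 < nat c" "nat c < p ^ (k + 1)"
    by (auto simp: nat_less_iff simp flip: int_dvd_int_iff)
  then have "coprime (nat c) (p ^ (k + 1))"
    using assms(1) by (simp add: prime_imp_coprime coprime_commute)
  with \<open>0 < nat c\<close> \<open>nat c < p ^ (k + 1)\<close> show ?thesis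
    by (simp add: totatives_def residue_colour_def c_def)
qed

lemma residue_colour_differs:
  assumes "prime p" and "m \<ge> 1" and "n \<ge> 1"
    and "(of_nat m / of_nat n :: rat) \<in> T_set p k"
  shows "residue_colour p k m \<noteq> residue_colour p k n"
proof
  assume same: "residue_colour p k m = residue_colour p k n"
  have nz: "int m \<noteq> 0" "int n \<noteq> 0" "int m - int n \<noteq> 0"
    using assms(2,3,4) by (auto simp: T_set_def)
  have "padic_val p (of_int (int m) / of_int (int n)) = 0"
    using assms(4) by (simp add: T_set_def)
  then have v: "multiplicity (int p) (int m) = multiplicity (int p) (int n)"
    using padic_val_of_int_div[OF assms(1) nz(1,2)] by simp
  have "(of_nat m / of_nat n - 1 :: rat) = of_int (int m - int n) / of_int (int n)"
    using assms(3) by (simp add: field_simps)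
  then have "padic_val p (of_int (int m - int n) / of_int (int n)) \<le> int k"
    using assms(4) by (simp add: T_set_def)
  then have low: "multiplicity (int p) (int m - int n) \<le> multiplicity (int p) (int m) + k"
    using padic_val_of_int_div[OF assms(1) nz(3,2)] v by simp
  have "int p ^ (k + 1) > 0" using prime_gt_0_nat[OF assms(1)] by simp
  then have "[p_free_part p (int m) = p_free_part p (int n)] (mod int p ^ (k + 1))"
    using same by (simp add: residue_colour_def cong_def eq_nat_nat_iff)
  then have "int p ^ (multiplicity (int p) (int m) + (k + 1)) dvd int m - int n"
    using p_free_part_cong_imp_dvd_diff[OF assms(1) nz(1,2) v] by blast
  then have "multiplicity (int p) (int m) + (k + 1) \<le> multiplicity (int p) (int m - int n)"
    using nz(3) prime_gt_1_nat[OF assms(1)] by (intro multiplicity_geI) auto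
  with low show False by simp
qed

theorem proposition2p3:
  fixes p k :: nat
  assumes "prime p"
  shows "chi_G (T_set p k) \<le> enat (p ^ k * (p - 1))"
proof -
  have "residue_colour p k ` {n. 1 \<le> n} \<subseteq> totatives (p ^ (k + 1))"
    using residue_colour_in_totatives[OF assms] by blast
  moreover have "\<forall>u\<in>{n. 1 \<le> n}. \<forall>v\<in>{n. 1 \<le> n}.
      G_adj (T_set p k) u v \<longrightarrow> residue_colour p k u \<noteq> residue_colour p k v"
    using residue_colour_differs[OF assms] by (metis G_adj_def mem_Collect_eq)
  ultimately have "chi_G (T_set p k) \<le> enat (card (totatives (p ^ (k + 1))))"
    unfolding chi_G_def by (intro chromatic_number_le_card) simp_all
  also have "card (totatives (p ^ (k + 1))) = p ^ k * (p - 1)"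
    using totient_prime_power_Suc[OF assms, of k] by (simp add: totient_def)
  finally show ?thesis .
qed

end
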